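(* Let $n\ge1$, $r\ge1$ and $\underline{m}=(m_0,\dots,m_n)$ positive integers. For each $i\in\{0,\dots,n\}$ and each $k\in S_i$ there is a path from $v_0^0$ to $v_i^k$ in the graph $\overline{L}_{2n+1}^{r;\underline{m}}$.
   Context: A path in a directed graph is a finite nonempty sequence $e_1\cdots e_k$ of edges with $r(e_i)=s(e_{i+1})$, from $s(e_1)$ to $r(e_k)$. $\Lambda=L_{2n+1}\times_c\mathbb{Z}_r$ is the graph with vertices $(v_i,k)$, $0\le i\le n$, $k\in\mathbb{Z}_r$, and edges $(e_{ij},k)$, $0\le i\le j\le n$, $k\in\mathbb{Z}_r$, with source $(v_i,k-m_i\bmod r)$ and range $(v_j,k)$. A path from $(v_i,s)$ to $(v_j,t)$ is admissible if none of the vertices it passes through other than its source and range lies in $\{(v_\ell,k): i\le\ell\le j,\ 0\le k\le\gcd(m_\ell,r)-1\}$; $n_{ij}^{st}$ is the number of such paths. $H$ is the smallest hereditary subset of $\Lambda^0$ (closed under following paths) containing all $(v_i,0)$, and $S_i=\{k\in\{0,\dots,\gcd(m_i,r)-1\}:(v_i,k)\in H\}$. The graph $\overline{L}_{2n+1}^{r;\underline{m}}$ has vertices $v_i^k$ ($k\in S_i$) and edges $e_{ij;a}^{st}$ ($0\le i\le j\le n$, $s\in S_i$, $t\in S_j$, $1\le a\le n_{ij}^{st}$) from $v_i^s$ to $v_j^t$. *)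

theory Defs
  imports Main
begin

definition is_path :: "'e set \<Rightarrow> ('e \<Rightarrow> 'v) \<Rightarrow> ('e \<Rightarrow> 'v) \<Rightarrow> 'e list \<Rightarrow> bool" where
  "is_path E src rng p \<longleftrightarrow> p \<noteq> [] \<and> set p \<subseteq> E \<and>
     (\<forall>q. Suc q < length p \<longrightarrow> rng (p ! q) = src (p ! Suc q))"

definition path_from_to :: "'e set \<Rightarrow> ('e \<Rightarrow> 'v) \<Rightarrow> ('e \<Rightarrow> 'v) \<Rightarrow> 'e list \<Rightarrow> 'v \<Rightarrow> 'v \<Rightarrow> bool" where
  "path_from_to E src rng p u w \<longleftrightarrow> is_path E src rng p \<and> src (hd p) = u \<and> rng (last p) = w"

definition interior_vertices :: "('e \<Rightarrow> 'v) \<Rightarrow> 'e list \<Rightarrow> 'v set" where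
  "interior_vertices rng p = rng ` set (butlast p)"

text \<open>Vertex (v_i,k) is the pair (i,k) with i \<le> n, k < r.
Edge (e_{ij},k) is the triple (i,j,k) with i \<le> j \<le> n, k < r.\<close>

definition Lam_vertices :: "nat \<Rightarrow> nat \<Rightarrow> (nat \<times> nat) set" where
  "Lam_vertices n r = {(i, k). i \<le> n \<and> k < r}"

definition Lam_edges :: "nat \<Rightarrow> nat \<Rightarrow> (nat \<times> nat \<times> nat) set" where
  "Lam_edges n r = {(i, j, k). i \<le> j \<and> j \<le> n \<and> k < r}"

definition Lam_src :: "nat \<Rightarrow> (nat \<Rightarrow> nat) \<Rightarrow> nat \<times> nat \<times> nat \<Rightarrow> nat \<times> nat" where
  "Lam_src r m e = (case e of (i, j, k) \<Rightarrow> (i, nat ((int k - int (m i)) mod int r)))"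

definition Lam_rng :: "nat \<times> nat \<times> nat \<Rightarrow> nat \<times> nat" where
  "Lam_rng e = (case e of (i, j, k) \<Rightarrow> (j, k))"

definition forbidden :: "nat \<Rightarrow> (nat \<Rightarrow> nat) \<Rightarrow> nat \<Rightarrow> nat \<Rightarrow> (nat \<times> nat) set" where
  "forbidden r m i j = {(l, k). i \<le> l \<and> l \<le> j \<and> k < gcd (m l) r}"

definition admissible :: "nat \<Rightarrow> nat \<Rightarrow> (nat \<Rightarrow> nat) \<Rightarrow> nat \<Rightarrow> nat \<Rightarrow> nat \<Rightarrow> nat \<Rightarrow>
    (nat \<times> nat \<times> nat) list \<Rightarrow> bool" where
  "admissible n r m i j s t p \<longleftrightarrow>
     path_from_to (Lam_edges n r) (Lam_src r m) Lam_rng p (i, s) (j, t) \<and>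
     interior_vertices Lam_rng p \<inter> forbidden r m i j = {}"

definition n_adm :: "nat \<Rightarrow> nat \<Rightarrow> (nat \<Rightarrow> nat) \<Rightarrow> nat \<Rightarrow> nat \<Rightarrow> nat \<Rightarrow> nat \<Rightarrow> nat" where
  "n_adm n r m i j s t = card {p. admissible n r m i j s t p}"

definition hereditary :: "nat \<Rightarrow> nat \<Rightarrow> (nat \<Rightarrow> nat) \<Rightarrow> (nat \<times> nat) set \<Rightarrow> bool" where
  "hereditary n r m X \<longleftrightarrow> X \<subseteq> Lam_vertices n r \<and>
     (\<forall>e \<in> Lam_edges n r. Lam_src r m e \<in> X \<longrightarrow> Lam_rng e \<in> X)"

definition H_set :: "nat \<Rightarrow> nat \<Rightarrow> (nat \<Rightarrow> nat) \<Rightarrow> (nat \<times> nat) set" where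
  "H_set n r m = \<Inter> {X. hereditary n r m X \<and> {(i, 0) | i. i \<le> n} \<subseteq> X}"

definition S_set :: "nat \<Rightarrow> nat \<Rightarrow> (nat \<Rightarrow> nat) \<Rightarrow> nat \<Rightarrow> nat set" where
  "S_set n r m i = {k. k < gcd (m i) r \<and> (i, k) \<in> H_set n r m}"

text \<open>Vertex v_i^k is (i,k) with k \<in> S_i. Edge e_{ij;a}^{st} is (i,j,s,t,a)
from v_i^s to v_j^t.\<close>

definition Lbar_vertices :: "nat \<Rightarrow> nat \<Rightarrow> (nat \<Rightarrow> nat) \<Rightarrow> (nat \<times> nat) set" where
  "Lbar_vertices n r m = {(i, k). i \<le> n \<and> k \<in> S_set n r m i}"

definition Lbar_edges :: "nat \<Rightarrow> nat \<Rightarrow> (nat \<Rightarrow> nat) \<Rightarrow> (nat \<times> nat \<times> nat \<times> nat \<times> nat) set" where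
  "Lbar_edges n r m = {(i, j, s, t, a). i \<le> j \<and> j \<le> n \<and> s \<in> S_set n r m i \<and>
      t \<in> S_set n r m j \<and> 1 \<le> a \<and> a \<le> n_adm n r m i j s t}"

definition Lbar_src :: "nat \<times> nat \<times> nat \<times> nat \<times> nat \<Rightarrow> nat \<times> nat" where
  "Lbar_src e = (case e of (i, j, s, t, a) \<Rightarrow> (i, s))"

definition Lbar_rng :: "nat \<times> nat \<times> nat \<times> nat \<times> nat \<Rightarrow> nat \<times> nat" where
  "Lbar_rng e = (case e of (i, j, s, t, a) \<Rightarrow> (j, t))"

end

theory Submission
  imports Defs
begin

text \<open>
  The reachable set of \<open>(v\<^sub>0,0)\<close> in \<open>\<Lambda>\<close> is hereditary and contains every \<open>(v\<^sub>l,0)\<close>: the loops at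
  level 0 rotate the \<open>\<int>\<^sub>r\<close>-coordinate by \<open>m\<^sub>0\<close>, so after \<open>r - 1\<close> of them the edge \<open>e\<^sub>0\<^sub>l\<close> leads
  to \<open>(v\<^sub>l,0)\<close>. Hence it contains \<open>H\<close>. Call \<open>(v\<^sub>l,k)\<close> low if \<open>k < gcd(m\<^sub>l,r)\<close>; the vertices of
  \<open>Lbar\<close> are the low vertices of \<open>H\<close>. Cutting a path from \<open>(v\<^sub>0,0)\<close> to such a vertex at its low
  vertices yields admissible paths, each of which gives an edge of \<open>Lbar\<close> as soon as the set
  counted by \<open>n\<^sub>i\<^sub>j\<^sup>s\<^sup>t\<close> is finite. It is: an admissible path cannot repeat an interior vertex,
  since a repetition means it went once around a cycle at some level \<open>l\<close>, whose
  \<open>\<int>\<^sub>r\<close>-coordinates form a coset of \<open>gcd(m\<^sub>l,r)\<int>\<close> and hence contain a forbidden vertex.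
\<close>

section \<open>Paths and the transitive closure of the edge relation\<close>

definition edge_rel :: "'e set \<Rightarrow> ('e \<Rightarrow> 'v) \<Rightarrow> ('e \<Rightarrow> 'v) \<Rightarrow> ('v \<times> 'v) set" where
  "edge_rel E src rng = (\<lambda>e. (src e, rng e)) ` E"

lemma mem_edge_rel_iff: "(u, w) \<in> edge_rel E src rng \<longleftrightarrow> (\<exists>e \<in> E. src e = u \<and> rng e = w)"
  by (auto simp: edge_rel_def)

lemma edge_in_edge_rel: "e \<in> E \<Longrightarrow> (src e, rng e) \<in> edge_rel E src rng"
  by (simp add: edge_rel_def)

lemma path_from_to_single: "e \<in> E \<Longrightarrow> path_from_to E src rng [e] (src e) (rng e)"
  by (simp add: path_from_to_def is_path_def)

lemma path_from_to_snoc_iff: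
  assumes "p \<noteq> []"
  shows "path_from_to E src rng (p @ [e]) u w \<longleftrightarrow>
    path_from_to E src rng p u (src e) \<and> e \<in> E \<and> rng e = w"
proof -
  let ?link = "\<lambda>xs q. rng (xs ! q) = src (xs ! Suc q)"
  have len: "Suc q < length (p @ [e]) \<longleftrightarrow> Suc q < length p \<or> q = length p - 1" for q
    using assms by auto
  have "?link (p @ [e]) q = ?link p q" if "Suc q < length p" for q
    using that by (simp add: nth_append)
  moreover have "?link (p @ [e]) (length p - 1) \<longleftrightarrow> rng (last p) = src e"
    using assms by (simp add: nth_append last_conv_nth)
  ultimately have "(\<forall>q. Suc q < length (p @ [e]) \<longrightarrow> ?link (p @ [e]) q) \<longleftrightarrow>
      (\<forall>q. Suc q < length p \<longrightarrow> ?link p q) \<and> rng (last p) = src e"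
    unfolding len by (simp only: all_conj_distrib imp_disj1 disj_imp) blast
  with assms show ?thesis
    by (simp add: path_from_to_def is_path_def) blast
qed

lemma interior_vertices_snoc:
  "p \<noteq> [] \<Longrightarrow> interior_vertices rng (p @ [e]) = insert (rng (last p)) (interior_vertices rng p)"
  by (metis append_butlast_last_id butlast_snoc image_insert insert_is_Un interior_vertices_def
      list.set(1,2) set_append sup_commute)

lemma nth_in_interior_vertices: "q < length p - 1 \<Longrightarrow> rng (p ! q) \<in> interior_vertices rng p"
  using nth_mem[of q "butlast p"] by (simp add: interior_vertices_def nth_butlast)

lemma path_from_to_iff_trancl:
  "(\<exists>p. path_from_to E src rng p u w) \<longleftrightarrow> (u, w) \<in> (edge_rel E src rng)\<^sup>+"
proof
  assume "\<exists>p. path_from_to E src rng p u w"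
  then obtain p where "path_from_to E src rng p u w" ..
  then show "(u, w) \<in> (edge_rel E src rng)\<^sup>+"
  proof (induction p arbitrary: w rule: rev_induct)
    case Nil
    then show ?case
      by (simp add: path_from_to_def is_path_def)
  next
    case (snoc e p)
    show ?case
    proof (cases "p = []")
      case True
      with snoc.prems have "e \<in> E" "src e = u" "rng e = w"
        by (simp_all add: path_from_to_def is_path_def)
      then show ?thesis
        using r_into_trancl[OF edge_in_edge_rel[of e E src rng]] by simp
    next
      case False
      then have "path_from_to E src rng p u (src e)" "e \<in> E" "rng e = w"
        using snoc.prems by (simp_all add: path_from_to_snoc_iff)
      then have "(u, src e) \<in> (edge_rel E src rng)\<^sup>+"
        by (intro snoc.IH)
      with \<open>e \<in> E\<close> \<open>rng e = w\<close> show ?thesis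
        using trancl_into_trancl[OF _ edge_in_edge_rel[of e E src rng]] by simp
    qed
  qed
next
  assume "(u, w) \<in> (edge_rel E src rng)\<^sup>+"
  then show "\<exists>p. path_from_to E src rng p u w"
  proof (induction rule: trancl_induct)
    case (base w)
    then obtain e where "e \<in> E" "src e = u" "rng e = w"
      by (auto simp: mem_edge_rel_iff)
    then show ?case
      using path_from_to_single[of e E src rng] by blast
  next
    case (step v w)
    then obtain p e where "path_from_to E src rng p u (src e)" "e \<in> E" "v = src e" "w = rng e"
      by (auto simp: mem_edge_rel_iff)
    moreover have "p \<noteq> []"
      using calculation(1) by (simp add: path_from_to_def is_path_def)
    ultimately show ?case
      by (metis path_from_to_snoc_iff)
  qed
qed

lemma is_path_rng_mono:
  assumes "is_path E src rng p" and "\<forall>e \<in> E. f (src e) \<le> f (rng e)"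
    and "q \<le> q'" and "q' < length p"
  shows "f (rng (p ! q)) \<le> (f (rng (p ! q')) :: 'a :: order)"
proof (rule lift_Suc_mono_le_ivl[where f = "\<lambda>q. f (rng (p ! q))" and N = "{..<length p - 1}"])
  fix q assume "q \<in> {..<length p - 1}"
  then have "rng (p ! q) = src (p ! Suc q)" "p ! Suc q \<in> E"
    using assms(1) by (auto simp: is_path_def)
  with assms(2) show "f (rng (p ! q)) \<le> f (rng (p ! Suc q))"
    by simp
next
  show "q \<le> q'" "{q..<q'} \<subseteq> {..<length p - 1}"
    using assms(3,4) by auto
qed

lemma is_path_rng_const_between:
  assumes "is_path E src rng p" and "\<forall>e \<in> E. f (src e) \<le> f (rng e)"
    and "f (rng (p ! a)) = f (rng (p ! b))" and "a \<le> q" and "q \<le> b" and "b < length p"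
  shows "f (rng (p ! q)) = (f (rng (p ! a)) :: 'a :: order)"
proof -
  have "f (rng (p ! a)) \<le> f (rng (p ! q))" and "f (rng (p ! q)) \<le> f (rng (p ! b))"
    using is_path_rng_mono[OF assms(1,2)] assms(4-6) by simp_all
  with assms(3) show ?thesis
    by simp
qed

lemma is_path_src_hd_le:
  assumes "is_path E src rng p" and "\<forall>e \<in> E. f (src e) \<le> f (rng e)" and "q < length p"
  shows "f (src (hd p)) \<le> (f (rng (p ! q)) :: 'a :: order)"
proof -
  have "hd p \<in> E" and "hd p = p ! 0"
    using assms(1) by (auto simp: is_path_def hd_conv_nth)
  then have "f (src (hd p)) \<le> f (rng (p ! 0))"
    using assms(2) by simp
  also have "\<dots> \<le> f (rng (p ! q))"
    using is_path_rng_mono[OF assms(1,2)] assms(3) by simp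
  finally show ?thesis .
qed

lemma is_path_rng_le_last:
  assumes "is_path E src rng p" and "\<forall>e \<in> E. f (src e) \<le> f (rng e)" and "q < length p"
  shows "f (rng (p ! q)) \<le> (f (rng (last p)) :: 'a :: order)"
proof -
  have "p \<noteq> []"
    using assms(3) by auto
  then have "last p = p ! (length p - 1)"
    by (simp add: last_conv_nth)
  with is_path_rng_mono[OF assms(1,2)] assms(3) show ?thesis
    by simp
qed

section \<open>Orbits of a translation modulo \<open>r\<close>\<close>

lemma exists_mod_add_mult_less_gcd:
  fixes x M r :: nat
  assumes "0 < r"
  shows "\<exists>j. (x + j * M) mod r < gcd M r"
proof (cases "M = 0")
  case True
  then show ?thesis
    using assms by (intro exI[of _ 0]) simp
next
  case False
  define g where "g = gcd M r"
  define q where "q = x div g"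
  obtain u v where uv: "M * u = r * v + g"
    using bezout_nat[OF False] g_def by blast
  obtain r' where r': "r = Suc r'"
    using assms gr0_implies_Suc by blast
  have "x mod g < g" and "g \<le> r"
    using assms by (simp_all add: g_def)
  \<comment> \<open>adding \<open>q u r'\<close> copies of \<open>M\<close> subtracts \<open>q g\<close> modulo \<open>r\<close>, leaving \<open>x mod g\<close>\<close>
  have "x + (u * q * r') * M = x mod g + r * (q * g + q * r' * v)"
  proof -
    have "(u * q * r') * M = q * r' * (M * u)"
      by (simp add: algebra_simps)
    also have "\<dots> = q * r' * (r * v + g)"
      by (simp add: uv)
    finally show ?thesis
      using div_mod_decomp[of x g] by (simp add: q_def r' algebra_simps)
  qed
  then have "(x + (u * q * r') * M) mod r = x mod g"
    using \<open>x mod g < g\<close> \<open>g \<le> r\<close> by simp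
  with \<open>x mod g < g\<close> g_def show ?thesis
    by metis
qed

lemma mod_add_mult_periodic:
  fixes x j d M r :: nat
  assumes "r dvd d * M"
  shows "(x + j * M) mod r = (x + (j mod d) * M) mod r"
proof -
  obtain k where k: "d * M = r * k"
    using assms by blast
  have "j * M = (j mod d + j div d * d) * M"
    by (simp only: mod_div_mult_eq)
  also have "\<dots> = (j mod d) * M + j div d * (d * M)"
    by (simp only: distrib_right mult.assoc)
  finally have "x + j * M = (x + (j mod d) * M) + r * (j div d * k)"
    by (simp add: k)
  then show ?thesis
    by (metis mod_mult_self2)
qed

lemma mod_orbit_hits_below_gcd:
  fixes x d M r :: nat
  assumes "x < r" and "0 < d" and "(x + d * M) mod r = x"
  shows "\<exists>c < d. (x + c * M) mod r < gcd M r"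
proof -
  have "r dvd d * M"
    using assms(1,3) mod_eq_dvd_iff_nat[of x "x + d * M" r] by simp
  obtain j where "(x + j * M) mod r < gcd M r"
    using exists_mod_add_mult_less_gcd[of r x M] assms(1) by auto
  then have "(x + (j mod d) * M) mod r < gcd M r"
    using mod_add_mult_periodic[OF \<open>r dvd d * M\<close>] by simp
  moreover have "j mod d < d"
    using assms(2) by simp
  ultimately show ?thesis
    by blast
qed

abbreviation Lam_rel :: "nat \<Rightarrow> nat \<Rightarrow> (nat \<Rightarrow> nat) \<Rightarrow> ((nat \<times> nat) \<times> nat \<times> nat) set" where
  "Lam_rel n r m \<equiv> edge_rel (Lam_edges n r) (Lam_src r m) Lam_rng"

abbreviation Lbar_rel :: "nat \<Rightarrow> nat \<Rightarrow> (nat \<Rightarrow> nat) \<Rightarrow> ((nat \<times> nat) \<times> nat \<times> nat) set" where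
  "Lbar_rel n r m \<equiv> edge_rel (Lbar_edges n r m) Lbar_src Lbar_rng"

lemma Lam_edge_level_le: "e \<in> Lam_edges n r \<Longrightarrow> fst (Lam_src r m e) \<le> fst (Lam_rng e)"
  by (auto simp: Lam_edges_def Lam_src_def Lam_rng_def)

lemma Lam_rng_in_vertices: "e \<in> Lam_edges n r \<Longrightarrow> Lam_rng e \<in> Lam_vertices n r"
  by (auto simp: Lam_edges_def Lam_rng_def Lam_vertices_def)

lemma Lam_rng_snd:
  assumes "e \<in> Lam_edges n r"
  shows "snd (Lam_rng e) = (snd (Lam_src r m e) + m (fst (Lam_src r m e))) mod r"
proof -
  obtain i j k where e: "e = (i, j, k)" and "k < r"
    using assms by (auto simp: Lam_edges_def)
  then have "int ((nat ((int k - int (m i)) mod int r) + m i) mod r) = (int k - int (m i) + int (m i)) mod int r"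
    by (simp add: of_nat_mod mod_add_left_eq)
  also have "\<dots> = int k"
    using \<open>k < r\<close> by simp
  finally show ?thesis
    by (simp add: e Lam_src_def Lam_rng_def)
qed

lemma Lam_rel_step:
  assumes "l \<le> l'" and "l' \<le> n" and "k < r"
  shows "((l, k), (l', (k + m l) mod r)) \<in> Lam_rel n r m"
proof -
  let ?e = "(l, l', (k + m l) mod r)"
  have "(int ((k + m l) mod r) - int (m l)) mod int r = (int k + int (m l) - int (m l)) mod int r"
    by (simp add: of_nat_mod mod_diff_left_eq)
  then have "Lam_src r m ?e = (l, k)"
    using assms(3) by (simp add: Lam_src_def)
  moreover have "?e \<in> Lam_edges n r"
    using assms by (simp add: Lam_edges_def)
  ultimately show ?thesis
    unfolding mem_edge_rel_iff by (auto simp: Lam_rng_def)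
qed

lemma Lam_rel_rotate:
  assumes "l \<le> n" and "k < r"
  shows "((l, k), (l, (k + j * m l) mod r)) \<in> (Lam_rel n r m)\<^sup>*"
proof (induction j)
  case 0
  then show ?case
    using assms(2) by simp
next
  case (Suc j)
  have "((k + j * m l) mod r + m l) mod r = (k + j * m l + m l) mod r"
    by (rule mod_add_left_eq)
  also have "\<dots> = (k + Suc j * m l) mod r"
    by (simp add: ac_simps)
  finally have "((k + j * m l) mod r + m l) mod r = (k + Suc j * m l) mod r" .
  then have "((l, (k + j * m l) mod r), (l, (k + Suc j * m l) mod r)) \<in> Lam_rel n r m"
    using Lam_rel_step[of l l n "(k + j * m l) mod r" r m] assms by simp
  with Suc.IH show ?case
    by (rule rtrancl_into_rtrancl)
qed

lemma Lam_reaches_level_base: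
  assumes "0 < r" and "l \<le> n"
  shows "((0, 0), (l, 0)) \<in> (Lam_rel n r m)\<^sup>+"
proof -
  have "(r - 1) * m 0 + m 0 = r * m 0"
    using assms(1) by (cases r) simp_all
  then have "(((r - 1) * m 0) mod r + m 0) mod r = 0"
    by (simp add: mod_add_left_eq)
  moreover have "((0, ((r - 1) * m 0) mod r), (l, (((r - 1) * m 0) mod r + m 0) mod r)) \<in> Lam_rel n r m"
    using Lam_rel_step[of 0 l n] assms by simp
  moreover have "((0, 0), (0, ((r - 1) * m 0) mod r)) \<in> (Lam_rel n r m)\<^sup>*"
    using Lam_rel_rotate[of 0 n 0 r "r - 1"] assms by simp
  ultimately show ?thesis
    by (simp add: rtrancl_into_trancl1)
qed

lemma Lam_trancl_level_le: "(u, w) \<in> (Lam_rel n r m)\<^sup>+ \<Longrightarrow> fst u \<le> fst w"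
proof (induction rule: trancl_induct)
  case (base w)
  then show ?case
    unfolding mem_edge_rel_iff using Lam_edge_level_le by blast
next
  case (step v w)
  then show ?case
    unfolding mem_edge_rel_iff using Lam_edge_level_le order_trans by blast
qed

lemma Lam_trancl_target_in_vertices: "(u, w) \<in> (Lam_rel n r m)\<^sup>+ \<Longrightarrow> w \<in> Lam_vertices n r"
  by (erule tranclE) (auto simp: mem_edge_rel_iff Lam_rng_in_vertices)

lemma H_set_closed:
  assumes "(u, w) \<in> (Lam_rel n r m)\<^sup>*" and "u \<in> H_set n r m"
  shows "w \<in> H_set n r m"
  using assms
proof (induction rule: rtrancl_induct)
  case (step v w)
  then obtain e where "e \<in> Lam_edges n r" "Lam_src r m e = v" "Lam_rng e = w"
    by (auto simp: mem_edge_rel_iff)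
  with step.IH step.prems show ?case
    unfolding H_set_def hereditary_def by blast
qed

lemma level_base_in_H_set: "l \<le> n \<Longrightarrow> (l, 0) \<in> H_set n r m"
  unfolding H_set_def by blast

lemma H_set_subset_reachable:
  assumes "0 < r"
  shows "H_set n r m \<subseteq> {w. ((0, 0), w) \<in> (Lam_rel n r m)\<^sup>+}"
proof -
  let ?R = "{w. ((0, 0), w) \<in> (Lam_rel n r m)\<^sup>+}"
  have "?R \<subseteq> Lam_vertices n r"
    using Lam_trancl_target_in_vertices by blast
  moreover have "Lam_rng e \<in> ?R" if "e \<in> Lam_edges n r" "Lam_src r m e \<in> ?R" for e
    using trancl_into_trancl[OF _ edge_in_edge_rel] that by simp
  moreover have "{(l, 0) | l. l \<le> n} \<subseteq> ?R"
    using Lam_reaches_level_base[OF assms] by blast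
  ultimately have "?R \<in> {X. hereditary n r m X \<and> {(l, 0) | l. l \<le> n} \<subseteq> X}"
    by (simp add: hereditary_def)
  then show ?thesis
    unfolding H_set_def by (rule Inter_lower)
qed

section \<open>Admissible paths\<close>

definition low_vertices :: "nat \<Rightarrow> (nat \<Rightarrow> nat) \<Rightarrow> (nat \<times> nat) set" where
  "low_vertices r m = {(l, k). k < gcd (m l) r}"

lemma forbidden_subset_low_vertices: "forbidden r m i j \<subseteq> low_vertices r m"
  by (auto simp: forbidden_def low_vertices_def)

lemma mem_S_set_iff: "k \<in> S_set n r m i \<longleftrightarrow> (i, k) \<in> low_vertices r m \<inter> H_set n r m"
  by (simp add: S_set_def low_vertices_def)

lemma Lam_path_rotate:
  assumes "is_path (Lam_edges n r) (Lam_src r m) Lam_rng p" and "a + c < length p"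
    and "\<And>q. a \<le> q \<Longrightarrow> q \<le> a + c \<Longrightarrow> fst (Lam_rng (p ! q)) = l"
  shows "snd (Lam_rng (p ! (a + c))) = (snd (Lam_rng (p ! a)) + c * m l) mod r"
  using assms(2,3)
proof (induction c)
  case 0
  have "p ! a \<in> Lam_edges n r"
    using assms(1) 0 by (auto simp: is_path_def)
  then have "snd (Lam_rng (p ! a)) < r"
    by (auto simp: Lam_edges_def Lam_rng_def)
  then show ?case
    by simp
next
  case (Suc c)
  let ?e = "p ! Suc (a + c)"
  have "?e \<in> Lam_edges n r" and "Lam_src r m ?e = Lam_rng (p ! (a + c))"
    using assms(1) Suc.prems(1) by (auto simp: is_path_def)
  then have "snd (Lam_rng ?e) = (snd (Lam_rng (p ! (a + c))) + m l) mod r"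
    using Lam_rng_snd[of ?e n r m] Suc.prems(2)[of "a + c"] by simp
  also have "\<dots> = (snd (Lam_rng (p ! a)) + c * m l + m l) mod r"
    using Suc by (simp add: mod_add_left_eq)
  finally show ?case
    by (simp add: ac_simps)
qed

lemma admissible_interior_no_repeat:
  assumes adm: "admissible n r m i j s t p" and "a < b" and "b < length p - 1"
  shows "Lam_rng (p ! a) \<noteq> Lam_rng (p ! b)"
proof
  assume eq: "Lam_rng (p ! a) = Lam_rng (p ! b)"
  let ?V = "\<lambda>q. Lam_rng (p ! q)"
  define l where "l = fst (?V a)"
  define x where "x = snd (?V a)"
  have path: "is_path (Lam_edges n r) (Lam_src r m) Lam_rng p"
    and hd: "Lam_src r m (hd p) = (i, s)" and last: "Lam_rng (last p) = (j, t)"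
    and avoid: "interior_vertices Lam_rng p \<inter> forbidden r m i j = {}"
    using adm by (auto simp: admissible_def path_from_to_def)
  have mono: "\<forall>e \<in> Lam_edges n r. fst (Lam_src r m e) \<le> fst (Lam_rng e)"
    using Lam_edge_level_le by blast
  have level: "fst (?V q) = l" if "a \<le> q" "q \<le> b" for q
    using is_path_rng_const_between[OF path mono, of a b q] eq that assms(3) by (simp add: l_def)
  have "p ! a \<in> Lam_edges n r"
    using path assms(2,3) by (auto simp: is_path_def)
  then have "x < r"
    by (auto simp: x_def Lam_edges_def Lam_rng_def)
  have "(x + (b - a) * m l) mod r = x"
    using Lam_path_rotate[OF path, of a "b - a" l] level assms(2,3) eq by (simp add: x_def)
  then obtain c where "c < b - a" and "(x + c * m l) mod r < gcd (m l) r"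
    using mod_orbit_hits_below_gcd \<open>x < r\<close> assms(2) by (metis zero_less_diff)
  then have "snd (?V (a + c)) < gcd (m l) r"
    using Lam_path_rotate[OF path, of a c l] level assms(3) by (simp add: x_def)
  moreover have "i \<le> l"
    using is_path_src_hd_le[OF path mono, of a] hd assms(2,3) by (simp add: l_def)
  moreover have "l \<le> j"
    using is_path_rng_le_last[OF path mono, of b] last eq assms(3) by (simp add: l_def)
  ultimately have "?V (a + c) \<in> forbidden r m i j"
    using level[of "a + c"] \<open>c < b - a\<close> by (cases "?V (a + c)") (auto simp: forbidden_def)
  moreover have "?V (a + c) \<in> interior_vertices Lam_rng p"
    using nth_in_interior_vertices[of "a + c" p Lam_rng] \<open>c < b - a\<close> assms(3) by simp
  ultimately show False
    using avoid by blast
qed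

lemma admissible_distinct_interior:
  assumes "admissible n r m i j s t p"
  shows "distinct (map Lam_rng (butlast p))"
proof -
  have "Lam_rng (p ! a) \<noteq> Lam_rng (p ! b)"
    if "a < length p - 1" "b < length p - 1" "a \<noteq> b" for a b
    using that admissible_interior_no_repeat[OF assms] by (metis linorder_neqE_nat)
  then show ?thesis
    by (auto simp: distinct_conv_nth nth_butlast)
qed

lemma finite_Lam_vertices: "finite (Lam_vertices n r)"
proof (rule finite_subset)
  show "Lam_vertices n r \<subseteq> {..n} \<times> {..<r}"
    by (auto simp: Lam_vertices_def)
qed simp

lemma finite_Lam_edges: "finite (Lam_edges n r)"
proof (rule finite_subset)
  show "Lam_edges n r \<subseteq> {..n} \<times> {..n} \<times> {..<r}"
    by (auto simp: Lam_edges_def)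
qed simp

lemma finite_admissible: "finite {p. admissible n r m i j s t p}"
proof -
  let ?N = "card (Lam_vertices n r) + 1"
  have "set p \<subseteq> Lam_edges n r \<and> length p \<le> ?N" if adm: "admissible n r m i j s t p" for p
  proof
    show edges: "set p \<subseteq> Lam_edges n r"
      using adm by (auto simp: admissible_def path_from_to_def is_path_def)
    have "set (map Lam_rng (butlast p)) \<subseteq> Lam_vertices n r"
      using edges Lam_rng_in_vertices by (auto dest: in_set_butlastD)
    then have "card (set (map Lam_rng (butlast p))) \<le> card (Lam_vertices n r)"
      by (rule card_mono[OF finite_Lam_vertices])
    then show "length p \<le> ?N"
      using distinct_card[OF admissible_distinct_interior[OF adm]] by simp
  qed
  then have "{p. admissible n r m i j s t p} \<subseteq> {p. set p \<subseteq> Lam_edges n r \<and> length p \<le> ?N}"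
    by blast
  then show ?thesis
    by (rule finite_subset) (rule finite_lists_length_le[OF finite_Lam_edges])
qed

lemma admissible_imp_Lbar_rel:
  assumes adm: "admissible n r m i j s t p"
    and "s \<in> S_set n r m i" and "t \<in> S_set n r m j"
  shows "((i, s), (j, t)) \<in> Lbar_rel n r m"
proof -
  have "((i, s), (j, t)) \<in> (Lam_rel n r m)\<^sup>+"
    using adm unfolding admissible_def path_from_to_iff_trancl[symmetric] by blast
  then have "i \<le> j" and "j \<le> n"
    using Lam_trancl_level_le Lam_trancl_target_in_vertices by (fastforce simp: Lam_vertices_def)+
  moreover have "1 \<le> n_adm n r m i j s t"
    using finite_admissible adm by (auto simp: n_adm_def Suc_le_eq card_gt_0_iff)
  ultimately have "(i, j, s, t, 1) \<in> Lbar_edges n r m"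
    using assms(2,3) by (simp add: Lbar_edges_def)
  from edge_in_edge_rel[OF this, of Lbar_src Lbar_rng] show ?thesis
    by (simp add: Lbar_src_def Lbar_rng_def)
qed

lemma low_path_imp_Lbar_rel:
  assumes "path_from_to (Lam_edges n r) (Lam_src r m) Lam_rng p v w"
    and "interior_vertices Lam_rng p \<inter> low_vertices r m = {}"
    and "v \<in> low_vertices r m \<inter> H_set n r m" and "w \<in> low_vertices r m \<inter> H_set n r m"
  shows "(v, w) \<in> Lbar_rel n r m"
proof -
  obtain i s j t where "v = (i, s)" "w = (j, t)"
    by fastforce
  moreover have "admissible n r m i j s t p"
    using assms(1,2) forbidden_subset_low_vertices[of r m i j] calculation
    unfolding admissible_def by blast
  ultimately show ?thesis
    using admissible_imp_Lbar_rel assms(3,4) mem_S_set_iff by metis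
qed

section \<open>Cutting paths at low vertices\<close>

lemma Lam_reachable_split_at_low:
  assumes "0 < r" and "((0, 0), w) \<in> (Lam_rel n r m)\<^sup>+"
  shows "\<exists>v p. v \<in> low_vertices r m \<inter> H_set n r m \<and> ((0, 0), v) \<in> (Lbar_rel n r m)\<^sup>* \<and>
    path_from_to (Lam_edges n r) (Lam_src r m) Lam_rng p v w \<and>
    interior_vertices Lam_rng p \<inter> low_vertices r m = {}"
  using assms(2)
proof (induction rule: trancl_induct)
  case (base w)
  then obtain e where e: "e \<in> Lam_edges n r" "Lam_src r m e = (0, 0)" "Lam_rng e = w"
    by (auto simp: mem_edge_rel_iff)
  have "(0, 0) \<in> low_vertices r m \<inter> H_set n r m"
    using assms(1) level_base_in_H_set[of 0 n r m] by (simp add: low_vertices_def)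
  with path_from_to_single[OF e(1), of "Lam_src r m" Lam_rng] e show ?case
    by (intro exI[of _ "(0, 0)"] exI[of _ "[e]"]) (simp add: interior_vertices_def)
next
  case (step w0 w)
  obtain v p where v: "v \<in> low_vertices r m \<inter> H_set n r m" "((0, 0), v) \<in> (Lbar_rel n r m)\<^sup>*"
    and p: "path_from_to (Lam_edges n r) (Lam_src r m) Lam_rng p v w0"
    and avoid: "interior_vertices Lam_rng p \<inter> low_vertices r m = {}"
    using step.IH by blast
  obtain e where e: "e \<in> Lam_edges n r" "Lam_src r m e = w0" "Lam_rng e = w"
    using step.hyps(2) by (auto simp: mem_edge_rel_iff)
  show ?case
  proof (cases "w0 \<in> low_vertices r m")
    case True
    have "w0 \<in> H_set n r m"
      using H_set_closed[OF trancl_into_rtrancl[OF step.hyps(1)]] level_base_in_H_set by blast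
    with True have "(v, w0) \<in> Lbar_rel n r m"
      using low_path_imp_Lbar_rel[OF p avoid v(1)] by blast
    with v(2) have "((0, 0), w0) \<in> (Lbar_rel n r m)\<^sup>*"
      by (rule rtrancl_into_rtrancl)
    with True \<open>w0 \<in> H_set n r m\<close> path_from_to_single[OF e(1), of "Lam_src r m" Lam_rng] e show ?thesis
      by (intro exI[of _ w0] exI[of _ "[e]"]) (simp add: interior_vertices_def)
  next
    case False
    have "p \<noteq> []" and "Lam_rng (last p) = w0"
      using p by (simp_all add: path_from_to_def is_path_def)
    then have "path_from_to (Lam_edges n r) (Lam_src r m) Lam_rng (p @ [e]) v w"
      using p e path_from_to_snoc_iff by metis
    moreover have "interior_vertices Lam_rng (p @ [e]) \<inter> low_vertices r m = {}"
      using interior_vertices_snoc[OF \<open>p \<noteq> []\<close>, of Lam_rng e] \<open>Lam_rng (last p) = w0\<close>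
        avoid False by simp
    ultimately show ?thesis
      using v by blast
  qed
qed

theorem lemma3p10:
  fixes n r :: nat and m :: "nat \<Rightarrow> nat"
  assumes "n \<ge> 1" and "r \<ge> 1" and "\<forall>l \<le> n. m l \<ge> 1"
  shows "\<forall>i \<le> n. \<forall>k \<in> S_set n r m i. \<exists>p.
           path_from_to (Lbar_edges n r m) Lbar_src Lbar_rng p (0, 0) (i, k)"
proof (intro allI impI ballI)
  fix i k
  assume "k \<in> S_set n r m i"
  then have low: "(i, k) \<in> low_vertices r m \<inter> H_set n r m"
    by (simp add: mem_S_set_iff)
  have "0 < r"
    using assms(2) by simp
  with low have "((0, 0), (i, k)) \<in> (Lam_rel n r m)\<^sup>+"
    using H_set_subset_reachable by blast
  then obtain v p where v: "v \<in> low_vertices r m \<inter> H_set n r m" "((0, 0), v) \<in> (Lbar_rel n r m)\<^sup>*"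
    and p: "path_from_to (Lam_edges n r) (Lam_src r m) Lam_rng p v (i, k)"
    and avoid: "interior_vertices Lam_rng p \<inter> low_vertices r m = {}"
    using Lam_reachable_split_at_low[OF \<open>0 < r\<close>] by blast
  have "(v, (i, k)) \<in> Lbar_rel n r m"
    using low_path_imp_Lbar_rel[OF p avoid v(1) low] .
  with v(2) have "((0, 0), (i, k)) \<in> (Lbar_rel n r m)\<^sup>+"
    by (rule rtrancl_into_trancl1)
  then show "\<exists>p. path_from_to (Lbar_edges n r m) Lbar_src Lbar_rng p (0, 0) (i, k)"
    unfolding path_from_to_iff_trancl .
qed

end
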